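(* For all $n\ge 2$, $\delta(n,2)=n-1$.
   Context: Strings here are arbitrary (not normalized) finite words. The prefix reversal (flip) $f^{(i)}$ applied to $s=s_1\cdots s_n$ ($1\le i\le n$) yields $s_i s_{i-1}\cdots s_1 s_{i+1}\cdots s_n$. Two strings are \emph{compatible} if each symbol occurs the same number of times in both. For compatible $s,t$, $d(s,t)$ is the minimum number of prefix reversals transforming $s$ into $t$. $S(n,k)$ is the set of strings of length $n$ whose set of occurring symbols is exactly $\{0,\dots,k-1\}$, and $\delta(n,k)$ is the maximum of $d(s,t)$ over all compatible pairs $s,t\in S(n,k)$. *)

theory Defs
  imports "HOL-Library.Multiset"
begin

definition flip :: "nat \<Rightarrow> nat list \<Rightarrow> nat list" where
  "flip i s = rev (take i s) @ drop i s"

definition apply_flips :: "nat list \<Rightarrow> nat list \<Rightarrow> nat list" where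
  "apply_flips is s = fold flip is s"

definition compatible :: "nat list \<Rightarrow> nat list \<Rightarrow> bool" where
  "compatible s t \<longleftrightarrow> mset s = mset t"

definition flips_to :: "nat list \<Rightarrow> nat list \<Rightarrow> nat \<Rightarrow> bool" where
  "flips_to s t m \<longleftrightarrow>
     (\<exists>is. length is = m \<and> (\<forall>i\<in>set is. 1 \<le> i \<and> i \<le> length s) \<and> apply_flips is s = t)"

definition flip_dist :: "nat list \<Rightarrow> nat list \<Rightarrow> nat" where
  "flip_dist s t = (LEAST m. flips_to s t m)"

definition S_set :: "nat \<Rightarrow> nat \<Rightarrow> nat list set" where
  "S_set n k = {s. length s = n \<and> set s = {0..<k}}"

definition delta :: "nat \<Rightarrow> nat \<Rightarrow> nat" where
  "delta n k = Max {flip_dist s t | s t. s \<in> S_set n k \<and> t \<in> S_set n k \<and> compatible s t}"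

end

theory Submission
  imports Defs
begin

(*
  Upper bound, by induction on the length: let x and y be the last symbols of s and t.  If x = y
  the prefixes are handled recursively.  Otherwise, if the first symbol of s is y, one flip of
  all of s fixes the last symbol of t; if the last two symbols of t occur as an inner factor of s,
  two flips fix both.  When neither reduction applies to (s, t) nor to (t, s), s begins and ends
  with x and has no factor y y, while t begins and ends with y and has no factor x x; so x is
  more frequent than y in s and less frequent in t, contradicting compatibility.

  Lower bound: a flip changes the number of maximal constant blocks of s @ [c] by at most one.
  For the alternating string s ending in 0 and its sorted rearrangement t, the strings s @ [1]
  and t @ [1] have n + 1 and 2 blocks.
*)

lemma length_flip [simp]: "length (flip i s) = length s"
  by (simp add: flip_def)

lemma flip_1 [simp]: "flip 1 s = s"
  by (cases s) (simp_all add: flip_def)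

lemma flip_flip: "i \<le> length s \<Longrightarrow> flip i (flip i s) = s"
  by (simp add: flip_def)

lemma flip_append: "i \<le> length p \<Longrightarrow> flip i (p @ q) = flip i p @ q"
  by (simp add: flip_def)

lemma apply_flips_Nil [simp]: "apply_flips [] s = s"
  and apply_flips_Cons [simp]: "apply_flips (i # is) s = apply_flips is (flip i s)"
  and apply_flips_append: "apply_flips (is @ js) s = apply_flips js (apply_flips is s)"
  by (simp_all add: apply_flips_def)

lemma length_apply_flips [simp]: "length (apply_flips is s) = length s"
  by (induction "is" arbitrary: s) auto

lemma apply_flips_replicate_1 [simp]: "apply_flips (replicate k 1) s = s"
  by (induction k) (simp_all add: apply_flips_def del: One_nat_def)

lemma apply_flips_rev:
  "\<forall>i\<in>set is. i \<le> length s \<Longrightarrow> apply_flips (rev is) (apply_flips is s) = s"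
  by (induction "is" arbitrary: s) (auto simp: apply_flips_append flip_flip)

lemma apply_flips_append_right:
  "\<forall>i\<in>set is. i \<le> length p \<Longrightarrow> apply_flips is (p @ q) = apply_flips is p @ q"
  by (induction "is" arbitrary: p) (auto simp: flip_append)

lemma flips_to_0 [simp]: "flips_to s t 0 \<longleftrightarrow> t = s"
  by (auto simp: flips_to_def)

lemma flips_to_Suc:
  "flips_to s t (Suc m) \<longleftrightarrow> (\<exists>i. 1 \<le> i \<and> i \<le> length s \<and> flips_to (flip i s) t m)"
  unfolding flips_to_def by (fastforce simp: length_Suc_conv)

lemma flips_to_flipI:
  "1 \<le> i \<Longrightarrow> i \<le> length s \<Longrightarrow> flips_to (flip i s) t m \<Longrightarrow> flips_to s t (Suc m)"
  unfolding flips_to_Suc by blast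

lemma flips_to_sym: "flips_to s t m \<Longrightarrow> flips_to t s m"
  unfolding flips_to_def by (metis apply_flips_rev length_apply_flips length_rev set_rev)

lemma flips_to_append: "flips_to s t m \<Longrightarrow> flips_to (s @ w) (t @ w) m"
  unfolding flips_to_def by (fastforce simp: apply_flips_append_right)

lemma flips_to_mono:
  assumes "flips_to s t m" "m \<le> k" "s \<noteq> []"
  shows "flips_to s t k"
proof -
  obtain "is" where "length is = m" "\<forall>i\<in>set is. 1 \<le> i \<and> i \<le> length s" "apply_flips is s = t"
    using assms(1) unfolding flips_to_def by blast
  moreover have "1 \<le> length s"
    using assms(3) by (simp add: Suc_le_eq)
  ultimately show ?thesis
    unfolding flips_to_def using assms(2)
    by (intro exI[of _ "is @ replicate (k - m) 1"]) (auto simp: apply_flips_append simp del: One_nat_def)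
qed

lemma flip_dist_le: "flips_to s t m \<Longrightarrow> flip_dist s t \<le> m"
  unfolding flip_dist_def by (rule Least_le)

lemma flips_to_flip_dist: "flips_to s t m \<Longrightarrow> flips_to s t (flip_dist s t)"
  unfolding flip_dist_def by (rule LeastI)

lemma flips_to_hd_to_last:
  "flips_to (rev s) t m \<Longrightarrow> flips_to (y # s) (t @ [y]) (Suc m)"
  by (rule flips_to_flipI[of "length (y # s)"]) (auto simp: flip_def dest: flips_to_append)

lemma flips_to_pair_to_last:
  assumes "flips_to (rev v @ u) w m"
  shows "flips_to (u @ p # q # v) (w @ [p, q]) (Suc (Suc m))"
proof -
  let ?s = "u @ p # q # v"
  have "flip (length ?s) (flip (length u + 2) ?s) = (rev v @ u) @ [p, q]"
    by (simp add: flip_def)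
  then have "flips_to (flip (length u + 2) ?s) (w @ [p, q]) (Suc m)"
    using flips_to_append[OF assms, of "[p, q]"] by (intro flips_to_flipI[of "length ?s"]) auto
  then show ?thesis
    by (rule flips_to_flipI[rotated 2]) auto
qed

text \<open>The last symbol of \<open>t\<close> is the first of \<open>s\<close>, so that flipping all of \<open>s\<close> puts
  it in place, or the last two symbols of \<open>t\<close> form a factor of \<open>s\<close> that is not a suffix, so
  that two flips put them in place.  Either way the problem shrinks by as many symbols as flips
  are spent, with at least one symbol to spare.\<close>

definition suffix_placeable :: "nat list \<Rightarrow> nat list \<Rightarrow> bool" where
  "suffix_placeable s t \<longleftrightarrow>
     hd s = last t \<or> (\<exists>u p q v w. s = u @ p # q # v \<and> v \<noteq> [] \<and> t = w @ [p, q])"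

lemma flips_to_if_suffix_placeable:
  assumes shorter: "\<And>u v. length u < n \<Longrightarrow> mset u = mset v \<Longrightarrow> set u \<subseteq> A \<Longrightarrow>
      flips_to u v (length u - 1)"
    and "length s = n" "set s \<subseteq> A" "suffix_placeable s t" "mset s = mset t" "2 \<le> n"
  shows "flips_to s t (n - 1)"
  using assms(4) unfolding suffix_placeable_def
proof (elim disjE exE conjE)
  assume hd_last: "hd s = last t"
  obtain y s0 where s: "s = y # s0"
    using assms(2,6) by (cases s) auto
  have "t \<noteq> []"
    using assms(5) s by auto
  then obtain t0 where t: "t = t0 @ [y]"
    using hd_last s by (metis append_butlast_last_id list.sel(1))
  have "flips_to (rev s0) t0 (length s0 - 1)"
    using shorter[of "rev s0" t0] assms(2,3,5) s t by auto
  then have "flips_to s t (Suc (length s0 - 1))"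
    using s t flips_to_hd_to_last by blast
  then show ?thesis
    using assms(2,6) s by (cases s0) auto
next
  fix u p q v w
  assume s: "s = u @ p # q # v" and "v \<noteq> []" and t: "t = w @ [p, q]"
  have "flips_to (rev v @ u) w (length (rev v @ u) - 1)"
    using shorter[of "rev v @ u" w] assms(2,3,5) s t by (auto simp: ac_simps)
  then have "flips_to s t (Suc (Suc (length (rev v @ u) - 1)))"
    using s t flips_to_pair_to_last by blast
  then show ?thesis
    using \<open>v \<noteq> []\<close> assms(2)[symmetric] s by (simp add: add.commute)
qed

lemma count_isolated_le:
  assumes "set xs \<subseteq> {x, y}" "\<nexists>u v. xs = u @ y # y # v"
  shows "count (mset xs) y \<le> count (mset xs) x + of_bool (xs \<noteq> [] \<and> hd xs = y)"
  using assms
proof (induction xs)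
  case Nil
  then show ?case by simp
next
  case (Cons a xs)
  have no_yy: "\<nexists>u v. xs = u @ y # y # v"
    using Cons.prems(2) by (metis append_Cons)
  have IH: "count (mset xs) y \<le> count (mset xs) x + of_bool (xs \<noteq> [] \<and> hd xs = y)"
    using Cons.IH no_yy Cons.prems(1) by auto
  show ?case
  proof (cases "a = y")
    case True
    then have "\<not> (xs \<noteq> [] \<and> hd xs = y)"
      using Cons.prems(2) by (metis append_Nil list.collapse)
    then show ?thesis using IH True by auto
  next
    case False
    then show ?thesis using IH Cons.prems(1) by (cases "xs \<noteq> [] \<and> hd xs = y") auto
  qed
qed

lemma count_lt_if_not_suffix_placeable:
  assumes "\<not> suffix_placeable s t" "set s \<subseteq> {x, y}" "set t \<subseteq> {x, y}" "x \<noteq> y" "y \<in> set s"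
    and s: "s = s' @ [x]" and t: "t = t' @ [p, y]"
  shows "count (mset s) y < count (mset s) x"
proof -
  have "hd s \<noteq> y"
    using assms(1) t unfolding suffix_placeable_def by auto
  moreover have "hd s \<in> set s"
    using s by (intro hd_in_set) simp
  ultimately have hd_s: "hd s = x"
    using assms(2) by blast
  obtain u v where first_y: "s = u @ y # v" "y \<notin> set u"
    using split_list_first[OF assms(5)] by blast
  obtain u' where "u = u' @ [x]"
    using first_y hd_s assms(2,4) by (cases u rule: rev_cases) auto
  moreover have "v \<noteq> []"
    using first_y s assms(4) by auto
  ultimately have "p \<noteq> x"
    using assms(1) first_y t unfolding suffix_placeable_def by fastforce
  then have "p = y"
    using assms(3) t by auto
  have no_yy: "\<nexists>u v. s' = u @ y # y # v"
  proof
    assume "\<exists>u v. s' = u @ y # y # v"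
    then obtain u v where "s = u @ y # y # (v @ [x])"
      using s by auto
    then show False
      using assms(1) t \<open>p = y\<close> unfolding suffix_placeable_def by blast
  qed
  have "s' \<noteq> []"
    using s assms(4,5) by auto
  then have "hd s' = x"
    using hd_s s by simp
  then have "count (mset s') y \<le> count (mset s') x"
    using count_isolated_le[OF _ no_yy, of x] assms(2,4) s by auto
  then show ?thesis
    using s assms(4) by simp
qed

lemma binary_suffix_placeable:
  assumes "mset s = mset t" "set s \<subseteq> {x, y}" "x \<noteq> y"
    and s: "s = s' @ [x]" and t: "t = t' @ [y]"
  shows "suffix_placeable s t \<or> suffix_placeable t s"
proof (rule ccontr)
  assume neither: "\<not> (suffix_placeable s t \<or> suffix_placeable t s)"
  have set_eq: "set t = set s"
    using assms(1) by (metis set_mset_mset)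
  obtain p t'' where t'': "t = t'' @ [p, y]"
    using t set_eq s assms(3) by (cases t' rule: rev_cases) auto
  obtain q s'' where s'': "s = s'' @ [q, x]"
    using s set_eq t assms(3) by (cases s' rule: rev_cases) auto
  have "count (mset s) y < count (mset s) x"
    using count_lt_if_not_suffix_placeable[OF _ _ _ assms(3) _ s t''] neither assms(2) set_eq t
    by auto
  moreover have "count (mset t) x < count (mset t) y"
    using count_lt_if_not_suffix_placeable[OF _ _ _ assms(3)[symmetric] _ t s''] neither assms(2)
      set_eq s by auto
  ultimately show False
    using assms(1) by simp
qed

lemma binary_flips_to:
  assumes "mset s = mset t" "set s \<subseteq> {a, b}"
  shows "flips_to s t (length s - 1)"
  using assms
proof (induction "length s" arbitrary: s t rule: less_induct)
  case less
  show ?case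
  proof (cases s rule: rev_cases)
    case Nil
    then show ?thesis
      using less.prems(1) by simp
  next
    case (snoc s' x)
    obtain t' y where t: "t = t' @ [y]"
      using less.prems(1) snoc by (cases t rule: rev_cases) auto
    show ?thesis
    proof (cases "x = y")
      case True
      then have "flips_to s' t' (length s' - 1)"
        using less.hyps[of s' t'] less.prems snoc t by auto
      then have "flips_to s t (length s' - 1)"
        using snoc t True flips_to_append by blast
      then show ?thesis
        using snoc by (auto intro: flips_to_mono)
    next
      case False
      have "set t = set s" "length t = length s"
        using less.prems(1) by (metis set_mset_mset, metis size_mset)
      then have "{a, b} = {x, y}" "s' \<noteq> []"
        using less.prems(2) snoc t False by auto
      then have "suffix_placeable s t \<or> suffix_placeable t s" and "2 \<le> length s"
        using binary_suffix_placeable[OF less.prems(1) _ False snoc t] less.prems(2) snoc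
        by (auto simp: Suc_le_eq)
      moreover have "flips_to t s (length s - 1)" if "suffix_placeable t s"
        using flips_to_if_suffix_placeable[OF less.hyps \<open>length t = length s\<close> _ that]
          less.prems \<open>set t = set s\<close> \<open>2 \<le> length s\<close> by simp
      ultimately show ?thesis
        using flips_to_if_suffix_placeable[OF less.hyps refl less.prems(2) _ less.prems(1)]
          flips_to_sym by blast
    qed
  qed
qed

lemma flip_dist_binary_le:
  "mset s = mset t \<Longrightarrow> set s \<subseteq> {a, b} \<Longrightarrow> flip_dist s t \<le> length s - 1"
  by (rule flip_dist_le) (rule binary_flips_to)

lemma length_remdups_adj_append:
  assumes "p \<noteq> []" "q \<noteq> []"
  shows "length (remdups_adj (p @ q)) + of_bool (last p = hd q)
    = length (remdups_adj p) + length (remdups_adj q)"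
proof -
  obtain p' a where p: "p = p' @ [a]"
    using assms(1) by (cases p rule: rev_cases) auto
  obtain b q' where q: "q = b # q'"
    using assms(2) by (cases q) auto
  have "remdups_adj (p @ q) = remdups_adj (p' @ [a, b]) @ tl (remdups_adj (b # q'))"
    using remdups_adj_append[of p b q'] p q by simp
  moreover have "remdups_adj (p' @ [a, b]) = remdups_adj p @ (if a = b then [] else [b])"
    using p by (simp add: remdups_adj_append_two)
  moreover have "length (remdups_adj (b # q')) \<ge> 1"
    by simp
  ultimately show ?thesis
    using p q by auto
qed

lemma length_remdups_adj_flip:
  assumes "1 \<le> i" "i \<le> length s"
  shows "length (remdups_adj (s @ [c])) \<le> length (remdups_adj (flip i s @ [c])) + 1"
proof -
  define p q where "p = take i s" and "q = drop i s @ [c]"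
  have "p \<noteq> []" "q \<noteq> []"
    using assms by (auto simp: p_def q_def)
  moreover have "s @ [c] = p @ q" "flip i s @ [c] = rev p @ q"
    by (simp_all add: p_def q_def flip_def)
  ultimately show ?thesis
    using length_remdups_adj_append[of p q] length_remdups_adj_append[of "rev p" q]
    by (simp add: of_bool_def split: if_splits)
qed

lemma flips_to_length_remdups_adj:
  "flips_to s t m \<Longrightarrow> length (remdups_adj (s @ [c])) \<le> length (remdups_adj (t @ [c])) + m"
proof (induction m arbitrary: s)
  case (Suc m)
  then obtain i where "1 \<le> i" "i \<le> length s" "flips_to (flip i s) t m"
    unfolding flips_to_Suc by blast
  then show ?case
    using Suc.IH length_remdups_adj_flip[of i s c] by fastforce
qed simp

lemma length_remdups_adj_sorted: "sorted xs \<Longrightarrow> length (remdups_adj xs) = card (set xs)"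
  by (induction xs rule: remdups_adj.induct) (auto simp: card_insert_if)

fun alternating :: "nat \<Rightarrow> nat list" where
  "alternating 0 = []"
| "alternating (Suc k) = k mod 2 # alternating k"

lemma length_alternating [simp]: "length (alternating n) = n"
  by (induction n) auto

lemma set_alternating_subset: "set (alternating n) \<subseteq> {0, 1}"
  by (induction n) auto

lemma set_alternating:
  assumes "2 \<le> n"
  shows "set (alternating n) = {0, 1}"
proof -
  obtain k where "n = Suc (Suc k)"
    using assms by (metis add_2_eq_Suc le_Suc_ex)
  then have "{Suc k mod 2, k mod 2} \<subseteq> set (alternating n)"
    by simp
  moreover have "{Suc k mod 2, k mod 2} = {0, 1}"
    by (auto simp: mod_Suc)
  ultimately show ?thesis
    using set_alternating_subset by blast
qed

lemma distinct_adj_alternating: "distinct_adj (alternating n @ [1])"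
proof (induction n)
  case (Suc k)
  then show ?case
    by (cases k) (auto simp: distinct_adj_Cons mod_Suc)
qed simp

lemma flip_dist_alternating_sort: "n - 1 \<le> flip_dist (alternating n) (sort (alternating n))"
proof -
  let ?s = "alternating n" and ?t = "sort (alternating n)"
  have "flips_to ?s ?t (length ?s - 1)"
    by (rule binary_flips_to[OF _ set_alternating_subset]) simp
  then have "flips_to ?s ?t (flip_dist ?s ?t)"
    by (rule flips_to_flip_dist)
  then have "length (remdups_adj (?s @ [1])) \<le> length (remdups_adj (?t @ [1])) + flip_dist ?s ?t"
    by (rule flips_to_length_remdups_adj)
  moreover have "length (remdups_adj (?s @ [1])) = n + 1"
    using distinct_adj_alternating[of n] by (simp add: distinct_adj_altdef)
  moreover have "length (remdups_adj (?t @ [1])) \<le> 2"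
  proof -
    have "set (?t @ [1]) \<subseteq> {0, 1}"
      using set_alternating_subset by auto
    then have "card (set (?t @ [1])) \<le> card {0, 1::nat}"
      by (rule card_mono[rotated]) simp
    moreover have "sorted (?t @ [1])"
      using set_alternating_subset by (auto simp: sorted_append)
    ultimately show ?thesis
      by (simp add: length_remdups_adj_sorted)
  qed
  ultimately show ?thesis
    by simp
qed

lemma S_set_2: "S_set n 2 = {s. length s = n \<and> set s = {0, 1}}"
proof -
  have "{0..<2} = {0, 1::nat}"
    by auto
  then show ?thesis
    unfolding S_set_def by simp
qed

theorem theorem5p1:
  fixes n :: nat
  assumes "n \<ge> 2"
  shows "delta n 2 = n - 1"
proof -
  define D where "D = {flip_dist s t | s t. s \<in> S_set n 2 \<and> t \<in> S_set n 2 \<and> compatible s t}"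
  have upper: "d \<le> n - 1" if "d \<in> D" for d
  proof -
    obtain s t where "d = flip_dist s t" "length s = n" "set s = {0, 1}" "mset s = mset t"
      using \<open>d \<in> D\<close> unfolding D_def S_set_2 compatible_def by blast
    then show ?thesis
      using flip_dist_binary_le[of s t 0 1] by simp
  qed
  let ?s = "alternating n"
  have "?s \<in> S_set n 2" "sort ?s \<in> S_set n 2" "compatible ?s (sort ?s)"
    using set_alternating[OF assms] by (simp_all add: S_set_2 compatible_def)
  then have "flip_dist ?s (sort ?s) \<in> D"
    unfolding D_def by blast
  moreover have "flip_dist ?s (sort ?s) = n - 1"
    using upper[OF calculation] flip_dist_alternating_sort[of n] by simp
  ultimately have "n - 1 \<in> D"
    by simp
  moreover have "finite D"
    using upper by (intro finite_subset[of D "{..n - 1}"]) auto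
  ultimately have "Max D = n - 1"
    using upper by (intro Max_eqI) auto
  then show ?thesis
    unfolding delta_def D_def .
qed

end
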